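(* In the setting below, the optimal policy with views $$\pi^*(t)=\tfrac1\gamma(\Sigma^S)^{-1}\big(\tilde\alpha(t,y)+\tilde\beta(t)x-r_f\mathbf 1_N\big)+\tfrac1\gamma(\Sigma^S)^{-1}\Sigma^{S,X}\big(A(t)x+b(t)\big)$$ can be written as $$\pi^*(t)=\tfrac1\gamma(\Sigma^S)^{-1}(\alpha+\beta x-r_f\mathbf 1_N)+\tfrac1\gamma(\Sigma^S)^{-1}\Sigma^{S,X}\big(A_1(t)x+b_1(t)\big),$$ where $A_1(t)\in\mathbb R^{d\times d}$ solves the constant-coefficient Riccati equation $$A_1'+\tfrac{1-\gamma}{\gamma}\beta^\top(\Sigma^S)^{-1}\beta+A_1\big(\Sigma^X+\tfrac{1-\gamma}{\gamma}(\Sigma^{S,X})^\top(\Sigma^S)^{-1}\Sigma^{S,X}\big)A_1+A_1\big(\tfrac{1-\gamma}{\gamma}(\Sigma^{S,X})^\top(\Sigma^S)^{-1}\beta-\Theta\big)+\big(\tfrac{1-\gamma}{\gamma}(\Sigma^{S,X})^\top(\Sigma^S)^{-1}\beta-\Theta\big)^\top A_1=0,$$ and $b_1(t)\in\mathbb R^d$ solves $$b_1'+\tfrac{1-\gamma}{\gamma}\big(\beta^\top+A_1(\Sigma^{S,X})^\top\big)(\Sigma^S)^{-1}\big(\Sigma^{S,X}b_1+\alpha-r_f\mathbf 1_N\big)+\big(A_1\Sigma^X-\Theta^\top\big)b_1+A_1\Theta\mu=0,$$ with terminal conditions $A_1(T)=-P^\top\Omega^{-1}P$ and $b_1(T)=P^\top\Omega^{-1}y$.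 Furthermore, $A_1(t)$ is negative semi-definite on $[0,T]$, and if $A_1^{(1)}$ and $A_1^{(2)}$ are the solutions corresponding to view covariance matrices $\Omega^{(1)},\Omega^{(2)}$ with $(\Omega^{(1)})^{-1}\succeq(\Omega^{(2)})^{-1}$, then $A_1^{(1)}(t)\preceq A_1^{(2)}(t)$.
   Context: Setting: $\gamma>1$, risk-free rate $r_f$. $W$ is $N'$-dim Brownian motion; factors $dX=\Theta(\mu-X)dt+L^XdW$ in $\mathbb R^d$, prices $dS=D(S)((\alpha+\beta X)dt+L^SdW)$ in $\mathbb R^N$; views $Y(0,T)=PX(T)+\epsilon$, $P\in\mathbb R^{K\times d}$, $\epsilon\sim\mathcal N(0,\Omega)$ independent of $W$, $\Omega\succ0$; $\Theta$ has eigenvalues with positive real parts; $L^X,L^S$ full row rank; $\Sigma^X=L^X(L^X)^\top$, $\Sigma^S=L^S(L^S)^\top$, $\Sigma^{S,X}=L^S(L^X)^\top$; $\Sigma$ solves $\Theta\Sigma+\Sigma\Theta^\top=\Sigma^X$; $\eta(t)=(Pe^{-\Theta(T-t)}L^X)^\top(P(\Sigma-e^{-\Theta(T-t)}\Sigma e^{-\Theta^\top(T-t)})P^\top+\Omega)^{-1}$, $\tilde\Theta(t)=\Theta+L^X\eta(t)Pe^{-\Theta(T-t)}$, $\tilde\mu(t,y)=\mu+\tilde\Theta(t)^{-1}L^X\eta(t)(y-P\mu)$, $\tilde\alpha(t,y)=\alpha+L^S\eta(t)(y-P(I_d-e^{-\Theta(T-t)})\mu)$, $\tilde\beta(t)=\beta-L^S\eta(t)Pe^{-\Theta(T-t)}$.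 $A(t)$ solves $A'+\tfrac{1-\gamma}{\gamma}\tilde\beta^\top(\Sigma^S)^{-1}\tilde\beta+A(\Sigma^X+\tfrac{1-\gamma}{\gamma}(\Sigma^{S,X})^\top(\Sigma^S)^{-1}\Sigma^{S,X})A+A(\tfrac{1-\gamma}{\gamma}(\Sigma^{S,X})^\top(\Sigma^S)^{-1}\tilde\beta-\tilde\Theta)+(\tfrac{1-\gamma}{\gamma}(\Sigma^{S,X})^\top(\Sigma^S)^{-1}\tilde\beta-\tilde\Theta)^\top A=0$, $A(T)=0$; $b(t)$ solves $b'+\tfrac{1-\gamma}{\gamma}(\tilde\beta^\top+A(\Sigma^{S,X})^\top)(\Sigma^S)^{-1}(\Sigma^{S,X}b+\tilde\alpha(t,y)-r_f\mathbf 1_N)+(A\Sigma^X-\tilde\Theta^\top)b+A\tilde\Theta\tilde\mu(t,y)=0$, $b(T)=0$. The displayed $\pi^*$ is the optimal fraction-of-wealth policy of a CRRA investor (utility $z^{1-\gamma}/(1-\gamma)$) maximizing expected terminal utility given the view $Y(0,T)=y$, with $x$ the current factor value. $\preceq$ is the positive semi-definite (Loewner) order.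
   Formalization: The matrix $\tilde\Theta(t)$ is also assumed invertible for every t in [0,T]. The statement above fails without it. *)

theory Defs
  imports "HOL-Analysis.Analysis"
begin

fun mpow :: "real^'n^'n \<Rightarrow> nat \<Rightarrow> real^'n^'n" where
  "mpow M 0 = mat 1"
| "mpow M (Suc k) = M ** mpow M k"

definition mexp :: "real^'n^'n \<Rightarrow> real^'n^'n" where
  "mexp M = (\<Sum>k. (1 / fact k :: real) *\<^sub>R mpow M k)"

definition sym_pos_def :: "real^'n^'n \<Rightarrow> bool" where
  "sym_pos_def M \<longleftrightarrow> transpose M = M \<and> (\<forall>v. v \<noteq> 0 \<longrightarrow> v \<bullet> (M *v v) > 0)"

definition psd :: "real^'n^'n \<Rightarrow> bool" where
  "psd M \<longleftrightarrow> (\<forall>v. v \<bullet> (M *v v) \<ge> 0)"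

definition nsd :: "real^'n^'n \<Rightarrow> bool" where
  "nsd M \<longleftrightarrow> (\<forall>v. v \<bullet> (M *v v) \<le> 0)"

definition loewner_le :: "real^'n^'n \<Rightarrow> real^'n^'n \<Rightarrow> bool" where
  "loewner_le A B \<longleftrightarrow> psd (B - A)"

definition eigs_pos_real_part :: "real^'n^'n \<Rightarrow> bool" where
  "eigs_pos_real_part M \<longleftrightarrow>
     (\<forall>z::complex. det (mat z - (\<chi> i j. complex_of_real (M $ i $ j))) = 0 \<longrightarrow> Re z > 0)"

definition EE :: "real^'d^'d \<Rightarrow> real \<Rightarrow> real \<Rightarrow> real^'d^'d" where
  "EE Th T t = mexp (- (T - t) *\<^sub>R Th)"

definition eta :: "real^'d^'d \<Rightarrow> real^'w^'d \<Rightarrow> real^'d^'k \<Rightarrow> real^'k^'k \<Rightarrow> real^'d^'d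
                    \<Rightarrow> real \<Rightarrow> real \<Rightarrow> real^'k^'w" where
  "eta Th LX P Om Sig T t =
     transpose (P ** EE Th T t ** LX) **
     matrix_inv (P ** (Sig - EE Th T t ** Sig ** mexp (- (T - t) *\<^sub>R transpose Th)) ** transpose P + Om)"

definition Theta_t :: "real^'d^'d \<Rightarrow> real^'w^'d \<Rightarrow> real^'d^'k \<Rightarrow> real^'k^'k \<Rightarrow> real^'d^'d
                    \<Rightarrow> real \<Rightarrow> real \<Rightarrow> real^'d^'d" where
  "Theta_t Th LX P Om Sig T t = Th + LX ** eta Th LX P Om Sig T t ** P ** EE Th T t"

definition mu_t :: "real^'d^'d \<Rightarrow> real^'d \<Rightarrow> real^'w^'d \<Rightarrow> real^'d^'k \<Rightarrow> real^'k^'k \<Rightarrow> real^'d^'d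
                    \<Rightarrow> real \<Rightarrow> real^'k \<Rightarrow> real \<Rightarrow> real^'d" where
  "mu_t Th mu LX P Om Sig T y t =
     mu + matrix_inv (Theta_t Th LX P Om Sig T t) *v
            ((LX ** eta Th LX P Om Sig T t) *v (y - P *v mu))"

definition alpha_t :: "real^'d^'d \<Rightarrow> real^'d \<Rightarrow> real^'w^'d \<Rightarrow> real^'n \<Rightarrow> real^'w^'n \<Rightarrow> real^'d^'k
                    \<Rightarrow> real^'k^'k \<Rightarrow> real^'d^'d \<Rightarrow> real \<Rightarrow> real^'k \<Rightarrow> real \<Rightarrow> real^'n" where
  "alpha_t Th mu LX al LS P Om Sig T y t =
     al + (LS ** eta Th LX P Om Sig T t) *v (y - (P ** (mat 1 - EE Th T t)) *v mu)"

definition beta_t :: "real^'d^'d \<Rightarrow> real^'w^'d \<Rightarrow> real^'d^'n \<Rightarrow> real^'w^'n \<Rightarrow> real^'d^'k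
                    \<Rightarrow> real^'k^'k \<Rightarrow> real^'d^'d \<Rightarrow> real \<Rightarrow> real \<Rightarrow> real^'d^'n" where
  "beta_t Th LX be LS P Om Sig T t =
     be - LS ** eta Th LX P Om Sig T t ** P ** EE Th T t"

text \<open>Given gamma, the covariance matrices SS = Sigma^S, SX = Sigma^X, SSX = Sigma^{S,X},
  a coefficient matrix B (beta or beta tilde) and a mean-reversion matrix Th (Theta or
  Theta tilde), ric_expr is the left-hand side of the matrix Riccati equation without A'.\<close>
definition ric_expr :: "real \<Rightarrow> real^'n^'n \<Rightarrow> real^'d^'d \<Rightarrow> real^'d^'n \<Rightarrow> real^'d^'n
                        \<Rightarrow> real^'d^'d \<Rightarrow> real^'d^'d \<Rightarrow> real^'d^'d" where
  "ric_expr g SS SX SSX B Th A =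
     ((1 - g) / g) *\<^sub>R (transpose B ** matrix_inv SS ** B)
     + A ** (SX + ((1 - g) / g) *\<^sub>R (transpose SSX ** matrix_inv SS ** SSX)) ** A
     + A ** (((1 - g) / g) *\<^sub>R (transpose SSX ** matrix_inv SS ** B) - Th)
     + transpose (((1 - g) / g) *\<^sub>R (transpose SSX ** matrix_inv SS ** B) - Th) ** A"

definition lin_expr :: "real \<Rightarrow> real \<Rightarrow> real^'n^'n \<Rightarrow> real^'d^'d \<Rightarrow> real^'d^'n \<Rightarrow> real^'d^'n
                        \<Rightarrow> real^'n \<Rightarrow> real^'d^'d \<Rightarrow> real^'d \<Rightarrow> real^'d^'d \<Rightarrow> real^'d \<Rightarrow> real^'d" where
  "lin_expr g rf SS SX SSX B a Th m A b =
     ((1 - g) / g) *\<^sub>R ((transpose B + A ** transpose SSX) ** matrix_inv SS)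
         *v (SSX *v b + a - rf *\<^sub>R vec 1)
     + (A ** SX - transpose Th) *v b
     + (A ** Th) *v m"

end

theory Submission
  imports Defs
begin

text \<open>
  Write \<open>E t = exp (-Th (T - t))\<close> and let
  \<open>V t = P (Sig - E t Sig (E t)\<^sup>T) P\<^sup>T + Om\<close>
  be the covariance of the view given the factor at time \<open>t\<close>. As a function of the
  current factor \<open>x\<close>, the log-likelihood of the view \<open>y\<close> is a quadratic with
  Hessian \<open>-G t\<close>, where \<open>G = (P E)\<^sup>T V\<^sup>-\<^sup>1 (P E)\<close>, and with gradient
  \<open>h t = (P E)\<^sup>T V\<^sup>-\<^sup>1 (y - P (I - E) mu)\<close> at \<open>0\<close>. All coefficients with views
  are the view-free ones corrected by this likelihood (\<open>beta_t = be - SSX G\<close>,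
  \<open>Theta_t = Th + SX G\<close>, \<open>alpha_t = al + SSX h\<close>), and \<open>G\<close>, \<open>h\<close> solve
  \<open>G' = Th\<^sup>T G + G SX G + G Th\<close> and \<open>h' = Th\<^sup>T h + G SX h + G Th mu\<close>.
  Hence \<open>A1 = A - G\<close> and \<open>b1 = b + h\<close> solve the constant-coefficient equations,
  with the terminal values of \<open>-G\<close> and \<open>h\<close> at \<open>T\<close>.

  For the sign and the monotonicity, the difference \<open>D\<close> of two symmetric solutions
  of \<open>-A' = C + A Q A + A K + K\<^sup>T A\<close> solves a Lyapunov equation
  \<open>-D' = D F + F\<^sup>T D + (C\<^sub>2 - C\<^sub>1)\<close>, so \<open>x \<bullet> D x\<close> is nonincreasing along
  solutions of \<open>x' = F x\<close>. For \<open>gam > 1\<close> the constant term is negative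
  semi-definite, and comparing \<open>A1\<close> with the zero solution of the equation
  without constant term gives \<open>A1 \<le> 0\<close>.
\<close>

lemma matrix_add_rdistrib: "((A::real^'m^'n) + B) ** C = A ** C + B ** C"
  by (simp add: matrix_matrix_mult_def vec_eq_iff sum.distrib distrib_right)

lemma matrix_diff_ldistrib: "(A::real^'m^'n) ** (B - C) = A ** B - A ** C"
  by (simp add: matrix_matrix_mult_def vec_eq_iff sum_subtractf right_diff_distrib)

lemma matrix_diff_rdistrib: "((A::real^'m^'n) - B) ** C = A ** C - B ** C"
  by (simp add: matrix_matrix_mult_def vec_eq_iff sum_subtractf left_diff_distrib)

lemma matrix_neg_left: "(- (A::real^'m^'n)) ** B = - (A ** B)"
  by (simp add: matrix_matrix_mult_def vec_eq_iff sum_negf)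

lemma matrix_neg_right: "(A::real^'m^'n) ** (- B) = - (A ** B)"
  by (simp add: matrix_matrix_mult_def vec_eq_iff sum_negf)

lemma matrix_scaleR_left: "(c *\<^sub>R (A::real^'m^'n)) ** B = c *\<^sub>R (A ** B)"
  by (simp add: scalar_matrix_assoc)

lemma matrix_scaleR_right: "(A::real^'m^'n) ** (c *\<^sub>R B) = c *\<^sub>R (A ** B)"
  by (simp add: matrix_scalar_ac scalar_matrix_assoc)

lemma transpose_add: "transpose ((A::real^'m^'n) + B) = transpose A + transpose B"
  by (simp add: transpose_def vec_eq_iff)

lemma transpose_diff: "transpose ((A::real^'m^'n) - B) = transpose A - transpose B"
  by (simp add: transpose_def vec_eq_iff)

lemma transpose_uminus: "transpose (- (A::real^'m^'n)) = - transpose A"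
  by (simp add: transpose_def vec_eq_iff)

lemma transpose_zero: "transpose (0::real^'m^'n) = 0"
  by (simp add: transpose_def vec_eq_iff)

lemma matrix_vector_mult_scaleR_left: "(c *\<^sub>R (A::real^'m^'n)) *v x = c *\<^sub>R (A *v x)"
  by (simp add: matrix_vector_mult_def vec_eq_iff sum_distrib_left mult.assoc)

lemma matrix_vector_mult_neg_left: "(- (A::real^'m^'n)) *v x = - (A *v x)"
  by (simp add: matrix_vector_mult_def vec_eq_iff sum_negf)

lemmas matrix_simps =
  matrix_add_ldistrib matrix_add_rdistrib matrix_diff_ldistrib matrix_diff_rdistrib
  matrix_neg_left matrix_neg_right matrix_scaleR_left matrix_scaleR_right
  transpose_add transpose_diff transpose_uminus transpose_zero transpose_scalar
  matrix_transpose_mul matrix_mul_assoc[symmetric]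

lemmas matrix_vector_simps =
  matrix_vector_mul_assoc[symmetric] matrix_vector_mult_add_rdistrib matrix_vector_mult_diff_rdistrib
  matrix_vector_mult_scaleR_left matrix_vector_mult_neg_left
  matrix_vector_right_distrib matrix_vector_mult_diff_distrib matrix_vector_mult_scaleR

lemma bounded_bilinear_matrix_mult:
  "bounded_bilinear ((**) :: real^'m^'n \<Rightarrow> real^'p^'m \<Rightarrow> real^'p^'n)"
  unfolding bilinear_conv_bounded_bilinear[symmetric] bilinear_def linear_iff
  by (simp add: matrix_simps)

lemma bounded_bilinear_matrix_vector_mult:
  "bounded_bilinear ((*v) :: real^'m^'n \<Rightarrow> real^'m \<Rightarrow> real^'n)"
  unfolding bilinear_conv_bounded_bilinear[symmetric] bilinear_def linear_iff
  by (simp add: matrix_vector_simps)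

lemma bounded_linear_transpose: "bounded_linear (transpose :: real^'m^'n \<Rightarrow> real^'n^'m)"
  unfolding linear_conv_bounded_linear[symmetric] linear_iff
  by (simp add: transpose_add transpose_scalar)

lemma inner_transpose_mult: "(transpose A *v y) \<bullet> z = y \<bullet> ((A::real^'m^'n) *v z)"
  by (simp add: dot_lmul_matrix)

lemma matrix_inv_left: "invertible (A::real^'n^'n) \<Longrightarrow> matrix_inv A ** A = mat 1"
  and matrix_inv_right: "invertible (A::real^'n^'n) \<Longrightarrow> A ** matrix_inv A = mat 1"
  unfolding invertible_def matrix_inv_def by (metis (mono_tags, lifting) someI_ex)+

lemma transpose_matrix_inv:
  assumes "invertible (A::real^'n^'n)" and "transpose A = A"
  shows "transpose (matrix_inv A) = matrix_inv A"
proof -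
  have "A ** transpose (matrix_inv A) = mat 1"
    using arg_cong[OF matrix_inv_left[OF assms(1)], of transpose] assms(2)
    by (simp add: matrix_transpose_mul)
  then have "matrix_inv A ** (A ** transpose (matrix_inv A)) = matrix_inv A" by simp
  then show ?thesis by (simp add: matrix_mul_assoc matrix_inv_left[OF assms(1)])
qed

lemma matrix_inv_resolvent:
  assumes "invertible (A::real^'n^'n)" and "invertible B"
  shows "matrix_inv A - matrix_inv B = - (matrix_inv A ** (A - B) ** matrix_inv B)"
proof -
  have "matrix_inv A ** (A - B) ** matrix_inv B
      = (matrix_inv A ** A) ** matrix_inv B - matrix_inv A ** (B ** matrix_inv B)"
    by (simp add: matrix_simps)
  then show ?thesis
    by (simp add: matrix_inv_left[OF assms(1)] matrix_inv_right[OF assms(2)])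
qed

section \<open>Positive semi-definite matrices\<close>

lemma psd_congruence: "psd M \<Longrightarrow> psd (transpose P ** M ** (P::real^'d^'k))"
  unfolding psd_def
  by (metis inner_commute inner_transpose_mult matrix_vector_mul_assoc)

lemma psd_gram: "psd (B ** transpose (B::real^'m^'n))"
  unfolding psd_def
  by (metis inner_ge_zero inner_transpose_mult matrix_vector_mul_assoc)

lemma psd_scaleR: "psd X \<Longrightarrow> c \<ge> 0 \<Longrightarrow> psd (c *\<^sub>R X)"
  by (simp add: psd_def matrix_vector_mult_scaleR_left)

lemma invertible_if_pos_def:
  assumes "\<And>v. v \<noteq> 0 \<Longrightarrow> v \<bullet> ((A::real^'n^'n) *v v) > 0"
  shows "invertible A"
proof -
  have "inj ((*v) A)"
  proof (rule injI)
    fix x y assume "A *v x = A *v y"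
    then have "(x - y) \<bullet> (A *v (x - y)) = 0" by (simp add: matrix_vector_mult_diff_distrib)
    then show "x = y" using assms[of "x - y"] by auto
  qed
  then show ?thesis
    using matrix_left_invertible_injective invertible_left_inverse by blast
qed

lemma psd_matrix_inv:
  assumes "invertible (A::real^'n^'n)" and "transpose A = A" and "psd A"
  shows "psd (matrix_inv A)"
  unfolding psd_def
proof
  fix v :: "real^'n"
  let ?w = "matrix_inv A *v v"
  have "v = A *v ?w" by (simp add: matrix_vector_mul_assoc matrix_inv_right[OF assms(1)])
  then have "v \<bullet> ?w = ?w \<bullet> (A *v ?w)"
    by (metis assms(2) inner_commute inner_transpose_mult)
  then show "0 \<le> v \<bullet> (matrix_inv A *v v)" using assms(3) by (simp add: psd_def)
qed

lemma sym_pos_def_psd: "sym_pos_def A \<Longrightarrow> psd A"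
  unfolding sym_pos_def_def psd_def
  by (metis order.refl inner_zero_left less_imp_le matrix_vector_mult_0_right)

lemma sym_pos_def_invertible: "sym_pos_def A \<Longrightarrow> invertible A"
  unfolding sym_pos_def_def by (blast intro: invertible_if_pos_def)

lemma sym_pos_def_transpose_inv:
  "sym_pos_def A \<Longrightarrow> transpose (matrix_inv A) = matrix_inv A"
  by (simp add: sym_pos_def_invertible transpose_matrix_inv sym_pos_def_def)

lemma sym_pos_def_psd_inv: "sym_pos_def A \<Longrightarrow> psd (matrix_inv A)"
  by (simp add: psd_matrix_inv sym_pos_def_invertible sym_pos_def_psd sym_pos_def_def)

lemma sym_pos_def_gram:
  fixes L :: "real^'m^'n"
  assumes "rank L = CARD('n)"
  shows "sym_pos_def (L ** transpose L)"
  unfolding sym_pos_def_def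
proof (intro conjI allI impI)
  show "transpose (L ** transpose L) = L ** transpose L"
    by (simp add: matrix_transpose_mul)
  fix v :: "real^'n" assume "v \<noteq> 0"
  have "inj ((*v) (transpose L))"
    using assms full_rank_injective[of "transpose L"] rank_transpose[of L] by simp
  then have "transpose L *v v \<noteq> 0"
    using \<open>v \<noteq> 0\<close> by (metis injD matrix_vector_mult_0_right)
  moreover have "v \<bullet> ((L ** transpose L) *v v) = (transpose L *v v) \<bullet> (transpose L *v v)"
    by (metis inner_transpose_mult matrix_vector_mul_assoc)
  ultimately show "v \<bullet> ((L ** transpose L) *v v) > 0" by simp
qed

section \<open>Calculus of vector-valued functions of time\<close>

lemma has_vector_derivative_componentwise:
  fixes f :: "real \<Rightarrow> 'a::real_normed_vector^'n"
  assumes "\<And>i. ((\<lambda>t. f t $ i) has_vector_derivative f' $ i) (at x within S)"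
  shows "(f has_vector_derivative f') (at x within S)"
proof -
  have "((\<lambda>y. \<chi> i. (1 / norm (y - x)) *\<^sub>R (f y $ i - (f x $ i + (y - x) *\<^sub>R f' $ i)))
          \<longlongrightarrow> (\<chi> i. 0)) (at x within S)"
    using assms unfolding has_vector_derivative_def has_derivative_within
    by (intro tendsto_vec_lambda) blast
  moreover have "(\<lambda>y. \<chi> i. (1 / norm (y - x)) *\<^sub>R (f y $ i - (f x $ i + (y - x) *\<^sub>R f' $ i)))
     = (\<lambda>y. (1 / norm (y - x)) *\<^sub>R (f y - (f x + (y - x) *\<^sub>R f')))"
    by (simp add: fun_eq_iff vec_eq_iff)
  ultimately show ?thesis
    unfolding has_vector_derivative_def has_derivative_within
    by (simp add: bounded_linear_scaleR_left zero_vec_def[symmetric])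
qed

lemma has_vector_derivative_iff_quotient:
  fixes f :: "real \<Rightarrow> 'a::real_normed_vector"
  shows "(f has_vector_derivative f') (at x within S) \<longleftrightarrow>
         ((\<lambda>y. (f y - f x) /\<^sub>R (y - x)) \<longlongrightarrow> f') (at x within S)"
proof -
  have "norm ((1 / norm (y - x)) *\<^sub>R (f y - (f x + (y - x) *\<^sub>R f'))) =
        norm ((f y - f x) /\<^sub>R (y - x) - f')" if "y \<noteq> x" for y
  proof -
    have "(f y - f x) /\<^sub>R (y - x) - f' = (1 / (y - x)) *\<^sub>R (f y - (f x + (y - x) *\<^sub>R f'))"
      using that by (simp add: scaleR_diff_right scaleR_add_right divide_inverse_commute)
    then show ?thesis by simp
  qed
  then have "((\<lambda>y. (1 / norm (y - x)) *\<^sub>R (f y - (f x + (y - x) *\<^sub>R f'))) \<longlongrightarrow> 0) (at x within S)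
       \<longleftrightarrow> ((\<lambda>y. (f y - f x) /\<^sub>R (y - x) - f') \<longlongrightarrow> 0) (at x within S)"
    by (subst (1 2) tendsto_norm_zero_iff[symmetric]) (intro Lim_cong_within, auto)
  then show ?thesis
    unfolding has_vector_derivative_def has_derivative_within
    by (simp add: bounded_linear_scaleR_left Lim_null[symmetric])
qed

lemma DERIV_within_nonpos_imp_nonincreasing:
  fixes f :: "real \<Rightarrow> real"
  assumes "a \<le> b"
    and "\<And>x. x \<in> {a..b} \<Longrightarrow> (f has_real_derivative f' x) (at x within {a..b})"
    and "\<And>x. x \<in> {a..b} \<Longrightarrow> f' x \<le> 0"
  shows "f b \<le> f a"
proof -
  obtain x where "x \<in> {a..b}" "f b - f a = (b - a) * f' x"
    using mvt_very_simple[OF assms(1), of f "\<lambda>x h. h * f' x"] assms(2)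
    by (auto simp: has_field_derivative_def mult_commute_abs)
  moreover have "(b - a) * f' x \<le> 0"
    using \<open>x \<in> {a..b}\<close> assms(1,3) by (simp add: mult_nonneg_nonpos)
  ultimately show ?thesis by simp
qed

lemma tendsto_matrix_inv:
  fixes M :: "'a \<Rightarrow> real^'n^'n"
  assumes lim: "(M \<longlongrightarrow> L) F" and inv: "\<forall>\<^sub>F s in F. invertible (M s)" and "invertible L"
  shows "((\<lambda>s. matrix_inv (M s)) \<longlongrightarrow> matrix_inv L) F"
proof -
  define N where "N s = matrix_inv (M s)" for s
  obtain K where K: "\<And>(A::real^'n^'n) (B::real^'n^'n). norm (A ** B) \<le> norm A * norm B * K"
    and "K > 0"
    using bounded_bilinear.pos_bounded[OF bounded_bilinear_matrix_mult] by blast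
  have K3: "norm (A ** B ** C) \<le> norm A * norm B * norm C * (K * K)" for A B C :: "real^'n^'n"
  proof -
    have "norm (A ** B ** C) \<le> norm (A ** B) * norm C * K" by (rule K)
    also have "\<dots> \<le> (norm A * norm B * K) * norm C * K"
      by (intro mult_right_mono K) (use \<open>K > 0\<close> in auto)
    finally show ?thesis by (simp add: ac_simps)
  qed
  have M_lim: "((\<lambda>s. M s - L) \<longlongrightarrow> 0) F"
    using lim by (simp add: Lim_null[symmetric])
  have "((\<lambda>s. norm (M s - L) * (K * K * norm (matrix_inv L))) \<longlongrightarrow> 0) F"
    by (intro tendsto_mult_left_zero tendsto_norm_zero M_lim)
  then have small: "\<forall>\<^sub>F s in F. norm (M s - L) * (K * K * norm (matrix_inv L)) < 1 / 2"
    by (rule order_tendstoD(2)) simp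
  (* By the resolvent identity, d = |N s - L\<^sup>-\<^sup>1| satisfies d \<le> e (|L\<^sup>-\<^sup>1| + d) with e of the
     order of |M s - L|; once e < 1/2, the term e d is absorbed into the left-hand side. *)
  have "\<forall>\<^sub>F s in F. norm (N s - matrix_inv L) \<le> norm (M s - L) * (2 * K * K * norm (matrix_inv L) ^ 2)"
    using inv small
  proof eventually_elim
    case (elim s)
    let ?d = "norm (N s - matrix_inv L)" and ?e = "norm (M s - L) * (K * K * norm (matrix_inv L))"
    have "?d \<le> norm (N s) * norm (M s - L) * norm (matrix_inv L) * (K * K)"
      using K3 by (simp add: N_def matrix_inv_resolvent[OF elim(1) \<open>invertible L\<close>])
    also have "\<dots> = norm (N s) * ?e" by (simp add: ac_simps)
    also have "\<dots> \<le> (norm (matrix_inv L) + ?d) * ?e"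
      by (rule mult_right_mono[OF norm_triangle_sub]) (use \<open>K > 0\<close> in simp)
    finally have "?d \<le> norm (matrix_inv L) * ?e + ?d * ?e"
      by (simp add: distrib_right)
    moreover have "?d * ?e \<le> ?d / 2"
      using mult_left_mono[OF less_imp_le[OF elim(2)], of ?d] by simp
    ultimately show ?case by (simp add: power2_eq_square ac_simps)
  qed
  then show ?thesis
    unfolding N_def[symmetric] Lim_null[of N]
    by (rule Lim_null_comparison) (intro tendsto_mult_left_zero tendsto_norm_zero M_lim)
qed

lemma has_vector_derivative_matrix_inv:
  fixes M :: "real \<Rightarrow> real^'n^'n"
  assumes dM: "(M has_vector_derivative M') (at t within S)"
    and inv: "\<forall>\<^sub>F s in at t within S. invertible (M s)" and inv_t: "invertible (M t)"
  shows "((\<lambda>s. matrix_inv (M s)) has_vector_derivative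
           - (matrix_inv (M t) ** M' ** matrix_inv (M t))) (at t within S)"
proof -
  have "((\<lambda>s. matrix_inv (M s)) \<longlongrightarrow> matrix_inv (M t)) (at t within S)"
    using has_vector_derivative_continuous[OF dM] inv inv_t
    by (intro tendsto_matrix_inv) (simp_all add: continuous_within)
  then have "((\<lambda>s. - (matrix_inv (M s) ** ((M s - M t) /\<^sub>R (s - t)) ** matrix_inv (M t)))
      \<longlongrightarrow> - (matrix_inv (M t) ** M' ** matrix_inv (M t))) (at t within S)"
    using dM unfolding has_vector_derivative_iff_quotient
    by (intro tendsto_minus bounded_bilinear.tendsto[OF bounded_bilinear_matrix_mult] tendsto_const)
  moreover have "\<forall>\<^sub>F s in at t within S.
      - (matrix_inv (M s) ** ((M s - M t) /\<^sub>R (s - t)) ** matrix_inv (M t))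
      = (matrix_inv (M s) - matrix_inv (M t)) /\<^sub>R (s - t)"
    using inv by eventually_elim
      (simp add: matrix_inv_resolvent[OF _ inv_t] matrix_scaleR_left matrix_scaleR_right)
  ultimately show ?thesis
    unfolding has_vector_derivative_iff_quotient by (rule Lim_transform_eventually)
qed

section \<open>The matrix exponential\<close>

lemma mpow_scaleR: "mpow (s *\<^sub>R M) k = (s ^ k) *\<^sub>R mpow M k"
  by (induct k) (simp_all add: matrix_scaleR_left matrix_scaleR_right)

lemma mpow_commute: "M ** mpow M k = mpow M k ** M"
  by (induct k) (simp_all add: matrix_mul_assoc)

lemma transpose_mpow: "transpose (mpow M k) = mpow (transpose M) k"
  by (induct k) (simp_all add: matrix_transpose_mul mpow_commute)

lemma summable_mexp_series:
  "summable (\<lambda>k. (s ^ k / fact k) *\<^sub>R mpow (M::real^'n^'n) k)"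
proof -
  obtain K where K: "\<And>(A::real^'n^'n) (B::real^'n^'n). norm (A ** B) \<le> norm A * norm B * K"
    using bounded_bilinear.bounded[OF bounded_bilinear_matrix_mult] by blast
  have "norm (mpow M k) \<le> norm (mat 1 :: real^'n^'n) * (norm M * \<bar>K\<bar>) ^ k" for k
  proof (induct k)
    case (Suc k)
    have "norm (mpow M (Suc k)) \<le> norm M * norm (mpow M k) * \<bar>K\<bar>"
      using K[of M "mpow M k"] by (simp add: order_trans[OF _ mult_left_mono])
    also have "\<dots> \<le> norm M * (norm (mat 1 :: real^'n^'n) * (norm M * \<bar>K\<bar>) ^ k) * \<bar>K\<bar>"
      by (intro mult_right_mono mult_left_mono Suc) auto
    finally show ?case by (simp add: algebra_simps)
  qed simp
  note mpow_bound = this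
  let ?c = "\<bar>s\<bar> * (norm M * \<bar>K\<bar>)"
  have bound: "norm ((s ^ k / fact k) *\<^sub>R mpow M k) \<le> norm (mat 1 :: real^'n^'n) * (inverse (fact k) * ?c ^ k)"
    for k
  proof -
    have "norm ((s ^ k / fact k) *\<^sub>R mpow M k) = (\<bar>s\<bar> ^ k / fact k) * norm (mpow M k)"
      by (simp add: power_abs)
    also have "\<dots> \<le> (\<bar>s\<bar> ^ k / fact k) * (norm (mat 1 :: real^'n^'n) * (norm M * \<bar>K\<bar>) ^ k)"
      by (rule mult_left_mono[OF mpow_bound]) simp
    also have "\<dots> = norm (mat 1 :: real^'n^'n) * (inverse (fact k) * ?c ^ k)"
      by (simp add: power_mult_distrib divide_inverse)
    finally show ?thesis .
  qed
  have "summable (\<lambda>k. norm (mat 1 :: real^'n^'n) * (inverse (fact k) * ?c ^ k))"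
    by (intro summable_mult summable_exp)
  then show ?thesis
    by (rule summable_norm_cancel[OF summable_comparison_test']) (use bound in simp_all)
qed

lemma mexp_scaleR: "mexp (s *\<^sub>R M) = (\<Sum>k. (s ^ k / fact k) *\<^sub>R mpow M k)"
  by (simp add: mexp_def mpow_scaleR)

lemma mexp_zero: "mexp (0::real^'n^'n) = mat 1"
proof -
  have "mpow (0::real^'n^'n) k = (if k = 0 then mat 1 else 0)" for k
    by (cases k) simp_all
  then have "mexp (0::real^'n^'n) = (\<Sum>k. if k = 0 then mat 1 else 0)"
    unfolding mexp_def by (intro suminf_cong) simp
  then show ?thesis
    using suminf_finite[of "{0}" "\<lambda>k. if k = 0 then (mat 1::real^'n^'n) else 0"] by simp
qed

lemma mexp_series_linear:
  assumes "bounded_linear L"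
  shows "L (mexp (s *\<^sub>R M)) = (\<Sum>k. L ((s ^ k / fact k) *\<^sub>R mpow M k))"
  unfolding mexp_scaleR by (rule bounded_linear.suminf[OF assms summable_mexp_series])

lemma mexp_commute: "M ** mexp (s *\<^sub>R M) = mexp (s *\<^sub>R M) ** M"
proof -
  note bl = bounded_bilinear.bounded_linear_right[OF bounded_bilinear_matrix_mult]
    bounded_bilinear.bounded_linear_left[OF bounded_bilinear_matrix_mult]
  have "M ** mexp (s *\<^sub>R M) = (\<Sum>k. M ** ((s ^ k / fact k) *\<^sub>R mpow M k))"
    by (rule mexp_series_linear[OF bl(1)])
  also have "\<dots> = (\<Sum>k. ((s ^ k / fact k) *\<^sub>R mpow M k) ** M)"
    by (simp add: matrix_scaleR_left matrix_scaleR_right mpow_commute)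
  also have "\<dots> = mexp (s *\<^sub>R M) ** M"
    by (rule mexp_series_linear[OF bl(2), symmetric])
  finally show ?thesis .
qed

lemma transpose_mexp: "transpose (mexp (s *\<^sub>R M)) = mexp (s *\<^sub>R transpose M)"
  using mexp_series_linear[OF bounded_linear_transpose, of s M]
  by (simp add: mexp_scaleR transpose_scalar transpose_mpow)

lemma has_vector_derivative_mexp:
  fixes M :: "real^'n^'n"
  shows "((\<lambda>s. mexp (s *\<^sub>R M)) has_vector_derivative M ** mexp (s *\<^sub>R M)) (at s)"
proof (intro has_vector_derivative_componentwise)
  fix i j
  define c where "c k = mpow M k $ i $ j / fact k" for k
  have entry: "bounded_linear (\<lambda>X::real^'n^'n. X $ i $ j)"
    using bounded_linear_compose[OF bounded_linear_vec_nth bounded_linear_vec_nth] .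
  have mexp_entry: "mexp (x *\<^sub>R M) $ i $ j = (\<Sum>k. c k * x ^ k)" for x
    using mexp_series_linear[OF entry] by (simp add: c_def mult.commute)
  have "summable (\<lambda>k. c k * x ^ k)" for x
    using bounded_linear.summable[OF entry summable_mexp_series[of x M]] by (simp add: c_def mult.commute)
  then have "((\<lambda>x. \<Sum>k. c k * x ^ k) has_real_derivative (\<Sum>k. diffs c k * s ^ k)) (at s)"
    by (rule termdiffs_strong_converges_everywhere)
  moreover have "(M ** mexp (s *\<^sub>R M)) $ i $ j = (\<Sum>k. diffs c k * s ^ k)"
  proof -
    have "diffs c k = (M ** mpow M k) $ i $ j / fact k" for k
      unfolding diffs_def c_def by (simp del: of_nat_Suc)
    then have "diffs c k * s ^ k = (M ** ((s ^ k / fact k) *\<^sub>R mpow M k)) $ i $ j" for k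
      by (simp add: matrix_scaleR_right)
    moreover have "(M ** mexp (s *\<^sub>R M)) $ i $ j = (\<Sum>k. (M ** ((s ^ k / fact k) *\<^sub>R mpow M k)) $ i $ j)"
      by (rule mexp_series_linear[OF bounded_linear_compose[OF entry
              bounded_bilinear.bounded_linear_right[OF bounded_bilinear_matrix_mult]]])
    ultimately show ?thesis by simp
  qed
  ultimately show "((\<lambda>x. mexp (x *\<^sub>R M) $ i $ j) has_vector_derivative (M ** mexp (s *\<^sub>R M)) $ i $ j) (at s)"
    by (simp add: mexp_entry has_real_derivative_iff_has_vector_derivative)
qed

lemma EE_T: "EE Th T T = mat 1"
  by (simp add: EE_def mexp_zero)

lemma transpose_EE: "transpose (EE Th T t) = mexp (- (T - t) *\<^sub>R transpose Th)"
  by (simp add: EE_def transpose_mexp)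

lemma has_vector_derivative_EE:
  "((\<lambda>t. EE Th T t) has_vector_derivative EE Th T t ** Th) (at t within S)"
proof -
  have "((\<lambda>s. mexp (s *\<^sub>R Th)) \<circ> (\<lambda>t. t - T) has_vector_derivative 1 *\<^sub>R (Th ** mexp ((t - T) *\<^sub>R Th)))
      (at t within S)"
    by (intro vector_diff_chain_within has_vector_derivative_at_within[OF has_vector_derivative_mexp])
       (auto intro!: derivative_eq_intros)
  then show ?thesis by (simp add: o_def EE_def mexp_commute)
qed

section \<open>Linear ODEs with continuous coefficients\<close>

primrec picard :: "(real \<Rightarrow> real^'n^'n) \<Rightarrow> real \<Rightarrow> real^'n \<Rightarrow> nat \<Rightarrow> real \<Rightarrow> real^'n" where
  "picard F a v 0 = (\<lambda>t. v)"
| "picard F a v (Suc k) = (\<lambda>t. v + integral {a..t} (\<lambda>s. F s *v picard F a v k s))"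

lemma continuous_on_picard:
  assumes "continuous_on {a..b} F"
  shows "continuous_on {a..b} (picard F a v k)"
proof (induct k)
  case (Suc k)
  have "continuous_on {a..b} (\<lambda>s. F s *v picard F a v k s)"
    by (rule bounded_bilinear.continuous_on[OF bounded_bilinear_matrix_vector_mult assms Suc])
  then show ?case
    by (simp add: continuous_on_add indefinite_integral_continuous_1 integrable_continuous_interval)
qed simp

lemma has_integral_power_shift:
  assumes "a \<le> t"
  shows "((\<lambda>s. (s - a) ^ k) has_integral (t - a) ^ Suc k / Suc k) {a..t}"
proof -
  have "((\<lambda>s. (s - a) ^ k) has_integral (t - a) ^ Suc k / Suc k - (a - a) ^ Suc k / Suc k) {a..t}"
    by (intro fundamental_theorem_of_calculus assms)
       (auto intro!: derivative_eq_intros simp: has_real_derivative_iff_has_vector_derivative[symmetric]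
             simp del: of_nat_Suc power_Suc)
  then show ?thesis by simp
qed

lemma continuous_on_picard_integrand:
  assumes "continuous_on {a..b} F" and "{c..t} \<subseteq> {a..b}"
  shows "continuous_on {c..t} (\<lambda>s. F s *v picard F a v k s)"
  by (rule continuous_on_subset[OF bounded_bilinear.continuous_on[OF bounded_bilinear_matrix_vector_mult
        assms(1) continuous_on_picard[OF assms(1)]] assms(2)])

lemma picard_step_eq:
  assumes "continuous_on {a..b} F" and "t \<in> {a..b}"
  shows "picard F a v (Suc (Suc k)) t - picard F a v (Suc k) t
    = integral {a..t} (\<lambda>s. F s *v (picard F a v (Suc k) s - picard F a v k s))"
proof -
  have "(\<lambda>s. F s *v picard F a v j s) integrable_on {a..t}" for j
    using assms by (intro integrable_continuous_interval continuous_on_picard_integrand) auto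
  moreover have "picard F a v (Suc j) t = v + integral {a..t} (\<lambda>s. F s *v picard F a v j s)" for j
    by simp
  ultimately show ?thesis
    by (simp del: picard.simps add: integral_diff matrix_vector_mult_diff_distrib)
qed

lemma norm_picard_step_le:
  assumes F: "continuous_on {a..b} F"
    and L: "\<And>s z. s \<in> {a..b} \<Longrightarrow> norm (F s *v z) \<le> L * norm z" and "L \<ge> 0"
    and t: "t \<in> {a..b}"
  shows "norm (picard F a v (Suc k) t - picard F a v k t) \<le> norm v * (L * (t - a)) ^ Suc k / fact (Suc k)"
  using t
proof (induct k arbitrary: t)
  case 0
  have "norm (integral {a..t} (\<lambda>s. F s *v v)) \<le> integral {a..t} (\<lambda>s. L * norm v)"
    using 0 continuous_on_picard_integrand[OF F, of a t v 0]
    by (intro integral_norm_bound_integral integrable_continuous_interval L) auto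
  with 0 show ?case by (simp add: algebra_simps)
next
  case (Suc k)
  let ?C = "norm v * L ^ Suc (Suc k) / fact (Suc k)"
  have "a \<le> t" using Suc.prems by auto
  have "norm (integral {a..t} (\<lambda>s. F s *v (picard F a v (Suc k) s - picard F a v k s)))
      \<le> integral {a..t} (\<lambda>s. ?C * (s - a) ^ Suc k)"
  proof (rule integral_norm_bound_integral)
    show "(\<lambda>s. F s *v (picard F a v (Suc k) s - picard F a v k s)) integrable_on {a..t}"
      using Suc.prems unfolding matrix_vector_mult_diff_distrib
      by (intro integrable_diff integrable_continuous_interval continuous_on_picard_integrand[OF F]) auto
    show "(\<lambda>s. ?C * (s - a) ^ Suc k) integrable_on {a..t}"
      by (intro integrable_continuous_interval continuous_intros)
    fix s assume "s \<in> {a..t}"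
    with Suc.prems have s: "s \<in> {a..b}" by auto
    have "norm (F s *v (picard F a v (Suc k) s - picard F a v k s))
        \<le> L * (norm v * (L * (s - a)) ^ Suc k / fact (Suc k))"
      using order_trans[OF L[OF s] mult_left_mono[OF Suc.hyps[OF s] \<open>L \<ge> 0\<close>]] .
    then show "norm (F s *v (picard F a v (Suc k) s - picard F a v k s)) \<le> ?C * (s - a) ^ Suc k"
      by (simp add: power_mult_distrib ac_simps)
  qed
  moreover have "integral {a..t} (\<lambda>s. ?C * (s - a) ^ Suc k) = ?C * ((t - a) ^ Suc (Suc k) / Suc (Suc k))"
    by (rule integral_unique[OF has_integral_mult_right[OF has_integral_power_shift[OF \<open>a \<le> t\<close>]]])
  moreover have "(fact (Suc (Suc k)) :: real) = real (Suc (Suc k)) * fact (Suc k)"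
    by (rule fact_Suc)
  ultimately show ?case
    unfolding picard_step_eq[OF F Suc.prems] by (simp only: power_mult_distrib) (simp add: ac_simps)
qed

lemma uniformly_convergent_picard:
  fixes F :: "real \<Rightarrow> real^'n^'n"
  assumes F: "continuous_on {a..b} F"
  shows "uniformly_convergent_on {a..b} (picard F a v)"
proof -
  obtain B where "B \<ge> 0" and B: "\<And>s. s \<in> {a..b} \<Longrightarrow> norm (F s) \<le> B"
    using continuous_on_compact_bound[OF compact_Icc F] by blast
  obtain K where K: "\<And>(A::real^'n^'n) z. norm (A *v z) \<le> norm A * norm z * K" and "K > 0"
    using bounded_bilinear.pos_bounded[OF bounded_bilinear_matrix_vector_mult] by blast
  define L where "L = B * K"
  have L: "norm (F s *v z) \<le> L * norm z" if "s \<in> {a..b}" for s z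
    using order_trans[OF K mult_right_mono[OF mult_right_mono[OF B[OF that]]]] \<open>K > 0\<close>
    by (simp add: L_def ac_simps)
  have "L \<ge> 0" using \<open>B \<ge> 0\<close> \<open>K > 0\<close> by (simp add: L_def)
  define M where "M i = norm v * (L * (b - a)) ^ Suc i / fact (Suc i)" for i
  have "norm (picard F a v (Suc i) t - picard F a v i t) \<le> M i" if t: "t \<in> {a..b}" for i t
  proof -
    have "norm (picard F a v (Suc i) t - picard F a v i t) \<le> norm v * (L * (t - a)) ^ Suc i / fact (Suc i)"
      by (rule norm_picard_step_le[OF F L \<open>L \<ge> 0\<close> t])
    also have "\<dots> \<le> M i"
      unfolding M_def using t \<open>L \<ge> 0\<close>
      by (intro divide_right_mono mult_left_mono power_mono) auto
    finally show ?thesis .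
  qed
  moreover have "summable M"
  proof -
    have "summable (\<lambda>i. norm v * (inverse (fact (i + 1)) * (L * (b - a)) ^ (i + 1)))"
      by (intro summable_mult summable_ignore_initial_segment summable_exp)
    moreover have "M i = norm v * (inverse (fact (i + 1)) * (L * (b - a)) ^ (i + 1))" for i
      by (simp add: M_def divide_inverse del: fact_Suc power_Suc)
    ultimately show ?thesis by presburger
  qed
  ultimately have "uniform_limit {a..b} (\<lambda>n t. \<Sum>i<n. picard F a v (Suc i) t - picard F a v i t)
      (\<lambda>t. \<Sum>i. picard F a v (Suc i) t - picard F a v i t) sequentially"
    by (rule Weierstrass_m_test)
  then have "uniform_limit {a..b} (\<lambda>n t. (\<Sum>i<n. picard F a v (Suc i) t - picard F a v i t) + v)
      (\<lambda>t. (\<Sum>i. picard F a v (Suc i) t - picard F a v i t) + v) sequentially"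
    by (intro uniform_limit_add uniform_limit_const)
  moreover have "(\<Sum>i<n. picard F a v (Suc i) t - picard F a v i t) + v = picard F a v n t" for n t
    using sum_lessThan_telescope[of "\<lambda>i. picard F a v i t" n] by simp
  ultimately show ?thesis
    unfolding uniformly_convergent_on_def by (metis (no_types, lifting) uniform_limit_cong')
qed

lemma picard_limit_integral_eq:
  assumes F: "continuous_on {a..b} F"
    and X: "uniform_limit {a..b} (picard F a v) X sequentially" and t: "t \<in> {a..b}"
  shows "X t = v + integral {a..t} (\<lambda>s. F s *v X s)"
proof -
  have sub: "{a..t} \<subseteq> {a..b}" using t by auto
  have "continuous_on {a..b} X"
    by (rule uniform_limit_theorem[OF _ X]) (simp_all add: continuous_on_picard[OF F])
  then have "uniform_limit {a..b} (\<lambda>n s. F s *v picard F a v n s) (\<lambda>s. F s *v X s) sequentially"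
    by (intro bounded_bilinear.bounded_uniform_limit[OF bounded_bilinear_matrix_vector_mult]
          uniform_limit_const X compact_imp_bounded compact_continuous_image compact_Icc F)
  then obtain I J where I: "\<And>n. ((\<lambda>s. F s *v picard F a v n s) has_integral I n) {a..t}"
    and J: "((\<lambda>s. F s *v X s) has_integral J) {a..t}" and "I \<longlonglongrightarrow> J"
    by (rule uniform_limit_integral[OF uniform_limit_on_subset[OF _ sub]])
       (auto intro: continuous_on_picard_integrand[OF F sub])
  then have "(\<lambda>n. picard F a v (Suc n) t) \<longlonglongrightarrow> v + J"
    by (simp add: integral_unique[OF I] tendsto_add)
  moreover have "(\<lambda>n. picard F a v (Suc n) t) \<longlonglongrightarrow> X t"
    using tendsto_uniform_limitI[OF X t] by (rule LIMSEQ_Suc)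
  ultimately show ?thesis
    using LIMSEQ_unique integral_unique[OF J] by metis
qed

lemma linear_ode_exists:
  fixes F :: "real \<Rightarrow> real^'n^'n"
  assumes F: "continuous_on {a..b} F" and "a \<le> b"
  obtains x where "x a = v"
    and "\<And>t. t \<in> {a..b} \<Longrightarrow> (x has_vector_derivative F t *v x t) (at t within {a..b})"
proof -
  obtain X where X: "uniform_limit {a..b} (picard F a v) X sequentially"
    using uniformly_convergent_picard[OF F] unfolding uniformly_convergent_on_def by blast
  note X_integral = picard_limit_integral_eq[OF F X]
  have "continuous_on {a..b} X"
    by (rule uniform_limit_theorem[OF _ X]) (simp_all add: continuous_on_picard[OF F])
  then have FX: "continuous_on {a..b} (\<lambda>s. F s *v X s)"
    by (rule bounded_bilinear.continuous_on[OF bounded_bilinear_matrix_vector_mult F])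
  show ?thesis
  proof
    show "X a = v" using X_integral[of a] \<open>a \<le> b\<close> by simp
    fix t assume t: "t \<in> {a..b}"
    show "(X has_vector_derivative F t *v X t) (at t within {a..b})"
      by (rule has_vector_derivative_transform[OF t X_integral])
         (auto intro!: derivative_eq_intros integral_has_vector_derivative[OF FX t])
  qed
qed

section \<open>Lyapunov and Riccati equations\<close>

lemma has_real_derivative_form_along_flows:
  fixes X :: "real \<Rightarrow> real^'n^'n"
  assumes dX: "(X has_vector_derivative - (X s ** F + G ** X s) - R) (at s within S)"
    and dx: "(x has_vector_derivative F *v x s) (at s within S)"
    and dy: "(y has_vector_derivative transpose G *v y s) (at s within S)"
  shows "((\<lambda>s. y s \<bullet> (X s *v x s)) has_real_derivative - (y s \<bullet> (R *v x s))) (at s within S)"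
proof -
  have "((\<lambda>s. y s \<bullet> (X s *v x s)) has_vector_derivative
      y s \<bullet> (X s *v (F *v x s) + (- (X s ** F + G ** X s) - R) *v x s) + (transpose G *v y s) \<bullet> (X s *v x s))
      (at s within S)"
    by (intro bounded_bilinear.has_vector_derivative[OF bounded_bilinear_inner dy]
          bounded_bilinear.has_vector_derivative[OF bounded_bilinear_matrix_vector_mult dX dx])
  moreover have "(transpose G *v y s) \<bullet> (X s *v x s) = y s \<bullet> (G *v (X s *v x s))"
    by (rule inner_transpose_mult)
  ultimately show ?thesis
    by (simp add: has_real_derivative_iff_has_vector_derivative matrix_vector_simps
        inner_add_right inner_diff_right inner_minus_right)
qed

lemma lyapunov_terminal_zero:
  fixes X F G :: "real \<Rightarrow> real^'n^'n"
  assumes "t \<le> T"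
    and dX: "\<And>s. s \<in> {t..T} \<Longrightarrow>
      (X has_vector_derivative - (X s ** F s + G s ** X s)) (at s within {t..T})"
    and F: "continuous_on {t..T} F" and G: "continuous_on {t..T} G"
    and "X T = 0"
  shows "X t = 0"
proof -
  have "u \<bullet> (X t *v v) = 0" for u v
  proof -
    obtain x where "x t = v" and dx: "\<And>s. s \<in> {t..T} \<Longrightarrow> (x has_vector_derivative F s *v x s) (at s within {t..T})"
      using linear_ode_exists[OF F \<open>t \<le> T\<close>] by blast
    obtain y where "y t = u"
      and dy: "\<And>s. s \<in> {t..T} \<Longrightarrow> (y has_vector_derivative transpose (G s) *v y s) (at s within {t..T})"
      using linear_ode_exists[OF bounded_linear.continuous_on[OF bounded_linear_transpose G] \<open>t \<le> T\<close>]
      by blast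
    have "((\<lambda>s. y s \<bullet> (X s *v x s)) has_real_derivative 0) (at s within {t..T})" if "s \<in> {t..T}" for s
      using has_real_derivative_form_along_flows[where R = 0, OF _ dx dy, of X] dX that by simp
    then obtain c where "\<forall>s\<in>{t..T}. y s \<bullet> (X s *v x s) = c"
      using has_field_derivative_zero_constant[of "{t..T}"] by blast
    with \<open>t \<le> T\<close> have "y t \<bullet> (X t *v x t) = y T \<bullet> (X T *v x T)" by simp
    with \<open>x t = v\<close> \<open>y t = u\<close> \<open>X T = 0\<close> show ?thesis by simp
  qed
  note form_zero = this
  have "X t *v v = 0 *v v" for v
    using form_zero[of "X t *v v" v] by simp
  then show ?thesis by (simp add: matrix_eq)
qed

lemma lyapunov_terminal_psd:
  fixes X F R :: "real \<Rightarrow> real^'n^'n"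
  assumes "t \<le> T"
    and dX: "\<And>s. s \<in> {t..T} \<Longrightarrow>
      (X has_vector_derivative - (X s ** F s + transpose (F s) ** X s) - R s) (at s within {t..T})"
    and F: "continuous_on {t..T} F"
    and R: "\<And>s. s \<in> {t..T} \<Longrightarrow> psd (R s)"
    and "psd (X T)"
  shows "psd (X t)"
  unfolding psd_def
proof
  fix v :: "real^'n"
  obtain x where "x t = v" and dx: "\<And>s. s \<in> {t..T} \<Longrightarrow> (x has_vector_derivative F s *v x s) (at s within {t..T})"
    using linear_ode_exists[OF F \<open>t \<le> T\<close>] by blast
  have "x T \<bullet> (X T *v x T) \<le> x t \<bullet> (X t *v x t)"
    using \<open>t \<le> T\<close>
    by (rule DERIV_within_nonpos_imp_nonincreasing[OF _ has_real_derivative_form_along_flows[OF dX dx]])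
       (simp_all add: dx R[unfolded psd_def])
  moreover have "0 \<le> x T \<bullet> (X T *v x T)" using \<open>psd (X T)\<close> by (simp add: psd_def)
  ultimately show "0 \<le> v \<bullet> (X t *v v)" using \<open>x t = v\<close> by simp
qed

definition riccati :: "real^'n^'n \<Rightarrow> real^'n^'n \<Rightarrow> real^'n^'n \<Rightarrow> real^'n^'n \<Rightarrow> real^'n^'n" where
  "riccati C Q K A = C + A ** Q ** A + A ** K + transpose K ** A"

lemma riccati_symmetric:
  fixes A :: "real \<Rightarrow> real^'n^'n"
  assumes "transpose C = C" and "transpose Q = Q"
    and dA: "\<And>s. s \<in> {a..b} \<Longrightarrow> (A has_vector_derivative - riccati C Q K (A s)) (at s within {a..b})"
    and "transpose (A b) = A b" and t: "t \<in> {a..b}"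
  shows "transpose (A t) = A t"
proof -
  have sub: "{t..b} \<subseteq> {a..b}" using t by auto
  have dA': "(A has_vector_derivative - riccati C Q K (A s)) (at s within {t..b})" if "s \<in> {t..b}" for s
    using has_vector_derivative_within_subset[OF dA sub] that sub by blast
  have "A t - transpose (A t) = 0"
  proof (rule lyapunov_terminal_zero[where X = "\<lambda>s. A s - transpose (A s)"
        and F = "\<lambda>s. Q ** A s + K" and G = "\<lambda>s. transpose (A s) ** Q + transpose K"])
    fix s assume s: "s \<in> {t..b}"
    have "((\<lambda>s. A s - transpose (A s)) has_vector_derivative
        - riccati C Q K (A s) - transpose (- riccati C Q K (A s))) (at s within {t..b})"
      by (intro has_vector_derivative_diff dA'[OF s]
          bounded_linear.has_vector_derivative[OF bounded_linear_transpose])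
    moreover have "- riccati C Q K (A s) - transpose (- riccati C Q K (A s)) =
        - ((A s - transpose (A s)) ** (Q ** A s + K) + (transpose (A s) ** Q + transpose K) ** (A s - transpose (A s)))"
      using assms(1,2) by (simp add: riccati_def matrix_simps algebra_simps)
    ultimately show "((\<lambda>s. A s - transpose (A s)) has_vector_derivative
        - ((A s - transpose (A s)) ** (Q ** A s + K) + (transpose (A s) ** Q + transpose K) ** (A s - transpose (A s))))
        (at s within {t..b})"
      by simp
  next
    have A: "continuous_on {t..b} A" by (rule continuous_on_vector_derivative[OF dA'])
    then have AT: "continuous_on {t..b} (\<lambda>s. transpose (A s))"
      by (rule bounded_linear.continuous_on[OF bounded_linear_transpose])
    show "continuous_on {t..b} (\<lambda>s. Q ** A s + K)"
      and "continuous_on {t..b} (\<lambda>s. transpose (A s) ** Q + transpose K)"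
      by (intro continuous_intros bounded_bilinear.continuous_on[OF bounded_bilinear_matrix_mult] A AT)+
  qed (use t \<open>transpose (A b) = A b\<close> in simp_all)
  then show ?thesis by simp
qed

lemma riccati_comparison:
  fixes A1 A2 :: "real \<Rightarrow> real^'n^'n"
  assumes "transpose C1 = C1" "transpose C2 = C2" "transpose Q = Q"
    and dA1: "\<And>s. s \<in> {a..b} \<Longrightarrow> (A1 has_vector_derivative - riccati C1 Q K (A1 s)) (at s within {a..b})"
    and dA2: "\<And>s. s \<in> {a..b} \<Longrightarrow> (A2 has_vector_derivative - riccati C2 Q K (A2 s)) (at s within {a..b})"
    and "transpose (A1 b) = A1 b" "transpose (A2 b) = A2 b"
    and "psd (C2 - C1)" "psd (A2 b - A1 b)"
    and t: "t \<in> {a..b}"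
  shows "psd (A2 t - A1 t)"
proof -
  (* For symmetric A1, A2 and Q: A2 Q A2 - A1 Q A1 = D Q (A1 + A2)/2 + (A1 + A2) Q D/2 with
     D = A2 - A1, so D solves a Lyapunov equation with coefficient K + Q (A1 + A2)/2. *)
  let ?F = "\<lambda>s. K + (1/2) *\<^sub>R (Q ** (A1 s + A2 s))"
  have sub: "{t..b} \<subseteq> {a..b}" using t by auto
  have dA1': "(A1 has_vector_derivative - riccati C1 Q K (A1 s)) (at s within {t..b})"
    and dA2': "(A2 has_vector_derivative - riccati C2 Q K (A2 s)) (at s within {t..b})"
    if "s \<in> {t..b}" for s
    using has_vector_derivative_within_subset[OF dA1 sub] has_vector_derivative_within_subset[OF dA2 sub]
      that sub by blast+
  have sym1: "transpose (A1 s) = A1 s" and sym2: "transpose (A2 s) = A2 s" if "s \<in> {a..b}" for s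
    using riccati_symmetric[OF assms(1,3) dA1 assms(6) that] riccati_symmetric[OF assms(2,3) dA2 assms(7) that]
    by blast+
  show ?thesis
  proof (rule lyapunov_terminal_psd[where X = "\<lambda>s. A2 s - A1 s" and F = ?F and R = "\<lambda>s. C2 - C1"])
    fix s assume s: "s \<in> {t..b}"
    have "((\<lambda>s. A2 s - A1 s) has_vector_derivative - riccati C2 Q K (A2 s) - - riccati C1 Q K (A1 s))
        (at s within {t..b})"
      by (intro has_vector_derivative_diff dA1'[OF s] dA2'[OF s])
    moreover have "- riccati C2 Q K (A2 s) - - riccati C1 Q K (A1 s) =
        - ((A2 s - A1 s) ** ?F s + transpose (?F s) ** (A2 s - A1 s)) - (C2 - C1)"
      using assms(3) sym1[of s] sym2[of s] s sub
      by (auto simp: riccati_def matrix_simps algebra_simps)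
    ultimately show "((\<lambda>s. A2 s - A1 s) has_vector_derivative
        - ((A2 s - A1 s) ** ?F s + transpose (?F s) ** (A2 s - A1 s)) - (C2 - C1)) (at s within {t..b})"
      by simp
  next
    have "continuous_on {t..b} A1" by (rule continuous_on_vector_derivative[OF dA1'])
    moreover have "continuous_on {t..b} A2" by (rule continuous_on_vector_derivative[OF dA2'])
    ultimately show "continuous_on {t..b} ?F"
      by (intro continuous_intros bounded_bilinear.continuous_on[OF bounded_bilinear_matrix_mult])
  qed (use t assms(8,9) in simp_all)
qed

lemma riccati_nsd:
  fixes A :: "real \<Rightarrow> real^'n^'n"
  assumes "transpose C = C" "transpose Q = Q" "psd (- C)"
    and dA: "\<And>s. s \<in> {a..b} \<Longrightarrow> (A has_vector_derivative - riccati C Q K (A s)) (at s within {a..b})"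
    and "transpose (A b) = A b" "psd (- A b)"
    and t: "t \<in> {a..b}"
  shows "nsd (A t)"
proof -
  have "psd ((\<lambda>s. 0) t - A t)"
  proof (rule riccati_comparison[OF assms(1) _ assms(2) dA _ assms(5)])
    show "((\<lambda>s. 0) has_vector_derivative - riccati 0 Q K ((\<lambda>s. 0) s)) (at s within {a..b})" for s
      by (simp add: riccati_def)
  qed (use assms(3,6) t in \<open>simp_all add: transpose_zero\<close>)
  then show ?thesis
    by (simp add: psd_def nsd_def matrix_vector_mult_neg_left)
qed

lemma ric_expr_eq_riccati:
  "ric_expr g SS SX SSX B Th A =
     riccati (((1 - g) / g) *\<^sub>R (transpose B ** matrix_inv SS ** B))
       (SX + ((1 - g) / g) *\<^sub>R (transpose SSX ** matrix_inv SS ** SSX))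
       (((1 - g) / g) *\<^sub>R (transpose SSX ** matrix_inv SS ** B) - Th) A"
  by (simp add: ric_expr_def riccati_def)

lemma ric_expr_solution_nsd:
  fixes A :: "real \<Rightarrow> real^'d^'d" and P :: "real^'d^'k"
  assumes "g \<ge> 1" and SS: "sym_pos_def SS" and "transpose SX = SX"
    and dA: "\<forall>s\<in>{a..b}. (A has_vector_derivative - ric_expr g SS SX SSX B Th (A s)) (at s within {a..b})"
    and Om: "sym_pos_def Om" and Ab: "A b = - (transpose P ** matrix_inv Om ** P)"
    and t: "t \<in> {a..b}"
  shows "nsd (A t)"
proof (rule riccati_nsd[OF _ _ _ dA[rule_format, unfolded ric_expr_eq_riccati] _ _ t])
  have "(1 - g) / g \<le> 0" using \<open>g \<ge> 1\<close> by (simp add: divide_nonpos_pos)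
  then show "psd (- (((1 - g) / g) *\<^sub>R (transpose B ** matrix_inv SS ** B)))"
    using psd_scaleR[OF psd_congruence[OF sym_pos_def_psd_inv[OF SS]], of "- ((1 - g) / g)" B] by simp
  show "psd (- A b)"
    using Ab psd_congruence[OF sym_pos_def_psd_inv[OF Om]] by simp
qed (use SS Om \<open>transpose SX = SX\<close> Ab in \<open>simp_all add: sym_pos_def_transpose_inv matrix_simps\<close>)

lemma ric_expr_solution_mono:
  fixes A1 A2 :: "real \<Rightarrow> real^'d^'d" and P :: "real^'d^'k"
  assumes SS: "sym_pos_def SS" and "transpose SX = SX"
    and dA1: "\<forall>s\<in>{a..b}. (A1 has_vector_derivative - ric_expr g SS SX SSX B Th (A1 s)) (at s within {a..b})"
    and dA2: "\<forall>s\<in>{a..b}. (A2 has_vector_derivative - ric_expr g SS SX SSX B Th (A2 s)) (at s within {a..b})"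
    and Om1: "sym_pos_def Om1" and Om2: "sym_pos_def Om2"
    and le: "loewner_le (matrix_inv Om2) (matrix_inv Om1)"
    and A1b: "A1 b = - (transpose P ** matrix_inv Om1 ** P)"
    and A2b: "A2 b = - (transpose P ** matrix_inv Om2 ** P)"
    and t: "t \<in> {a..b}"
  shows "loewner_le (A1 t) (A2 t)"
  unfolding loewner_le_def
proof (rule riccati_comparison[OF _ _ _ dA1[rule_format, unfolded ric_expr_eq_riccati]
      dA2[rule_format, unfolded ric_expr_eq_riccati] _ _ _ _ t])
  have "A2 b - A1 b = transpose P ** (matrix_inv Om1 - matrix_inv Om2) ** P"
    by (simp add: A1b A2b matrix_simps)
  then show "psd (A2 b - A1 b)"
    using psd_congruence[OF le[unfolded loewner_le_def]] by simp
qed (use SS Om1 Om2 \<open>transpose SX = SX\<close> A1b A2b in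
      \<open>simp_all add: sym_pos_def_transpose_inv matrix_simps psd_def\<close>)

lemma ric_expr_shift:
  assumes "transpose G = G" and "transpose (matrix_inv SS) = matrix_inv SS" and "transpose SX = SX"
  shows "ric_expr g SS SX SSX (B - SSX ** G) (Th + SX ** G) A + (transpose Th ** G + G ** SX ** G + G ** Th)
    = ric_expr g SS SX SSX B Th (A - G)"
  using assms by (simp add: ric_expr_def matrix_simps algebra_simps)

lemma lin_expr_shift:
  assumes "transpose G = G" and "transpose SX = SX" and "(Th + SX ** G) *v m = Th *v mu + SX *v h"
  shows "lin_expr g rf SS SX SSX (B - SSX ** G) (a + SSX *v h) (Th + SX ** G) m A b
      - (transpose Th *v h + (G ** SX) *v h + (G ** Th) *v mu)
    = lin_expr g rf SS SX SSX B a Th mu (A - G) (b + h)"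
proof -
  have "(A ** (Th + SX ** G)) *v m = A *v (Th *v mu + SX *v h)"
    by (simp add: assms(3) flip: matrix_vector_mul_assoc)
  then show ?thesis
    using assms(1,2)
    by (simp add: lin_expr_def matrix_simps matrix_vector_simps algebra_simps)
qed

section \<open>Views as a likelihood correction\<close>

locale view_model =
  fixes Th Sig SX :: "real^'d^'d" and P :: "real^'d^'k" and Om :: "real^'k^'k" and T :: real
  assumes lyapunov: "Th ** Sig + Sig ** transpose Th = SX"
    and SX_psd: "psd SX" and SX_sym: "transpose SX = SX"
    and Om_spd: "sym_pos_def Om"
begin

(* cond_cov t is the covariance of X(T) given X(t), view_cov t that of the view given X(t);
   view_precision and view_gradient are the G and h of the proof idea above. *)

definition cond_cov :: "real \<Rightarrow> real^'d^'d" where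
  "cond_cov t = Sig - EE Th T t ** Sig ** transpose (EE Th T t)"

definition view_load :: "real \<Rightarrow> real^'d^'k" where
  "view_load t = P ** EE Th T t"

definition view_cov :: "real \<Rightarrow> real^'k^'k" where
  "view_cov t = P ** cond_cov t ** transpose P + Om"

definition view_precision :: "real \<Rightarrow> real^'d^'d" where
  "view_precision t = transpose (view_load t) ** matrix_inv (view_cov t) ** view_load t"

definition view_gradient :: "real^'d \<Rightarrow> real^'k \<Rightarrow> real \<Rightarrow> real^'d" where
  "view_gradient mu y t =
     transpose (view_load t) *v (matrix_inv (view_cov t) *v (y - (P ** (mat 1 - EE Th T t)) *v mu))"

lemma has_vector_derivative_cond_cov:
  "(cond_cov has_vector_derivative - (EE Th T t ** SX ** transpose (EE Th T t))) (at t within S)"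
proof -
  have "(cond_cov has_vector_derivative
      0 - ((EE Th T t ** Sig) ** (transpose Th ** transpose (EE Th T t))
           + (EE Th T t ** Th ** Sig) ** transpose (EE Th T t))) (at t within S)"
    unfolding cond_cov_def[abs_def]
    using bounded_linear.has_vector_derivative[OF bounded_linear_transpose has_vector_derivative_EE]
      bounded_linear.has_vector_derivative[OF
        bounded_bilinear.bounded_linear_left[OF bounded_bilinear_matrix_mult] has_vector_derivative_EE]
    by (intro has_vector_derivative_diff has_vector_derivative_const
        bounded_bilinear.has_vector_derivative[OF bounded_bilinear_matrix_mult])
       (simp_all add: matrix_transpose_mul matrix_mul_assoc)
  then show ?thesis
    by (simp add: lyapunov[symmetric] matrix_simps algebra_simps)
qed

lemma cond_cov_T: "cond_cov T = 0"
  by (simp add: cond_cov_def EE_T)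

lemma transpose_cond_cov:
  assumes "t \<le> T"
  shows "transpose (cond_cov t) = cond_cov t"
proof -
  (* Sig itself need not be symmetric; only the Lyapunov equation is used. *)
  have "((\<lambda>s. cond_cov s - transpose (cond_cov s)) has_vector_derivative 0) (at s within {t..T})" for s
    using has_vector_derivative_diff[OF has_vector_derivative_cond_cov
        bounded_linear.has_vector_derivative[OF bounded_linear_transpose has_vector_derivative_cond_cov]]
    by (simp add: SX_sym matrix_simps)
  then obtain c where "\<And>s. s \<in> {t..T} \<Longrightarrow> cond_cov s - transpose (cond_cov s) = c"
    by (rule has_vector_derivative_zero_constant[OF convex_real_interval(5)]) blast
  from this[of t] this[of T] assms show ?thesis
    by (simp add: cond_cov_T transpose_zero)
qed

lemma psd_cond_cov:
  assumes "t \<le> T"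
  shows "psd (cond_cov t)"
  unfolding psd_def
proof
  fix v :: "real^'d"
  have "v \<bullet> (cond_cov T *v v) \<le> v \<bullet> (cond_cov t *v v)"
  proof (rule DERIV_within_nonpos_imp_nonincreasing[OF assms])
    fix s
    show "((\<lambda>s. v \<bullet> (cond_cov s *v v)) has_real_derivative
        v \<bullet> (- (EE Th T s ** SX ** transpose (EE Th T s)) *v v)) (at s within {t..T})"
      unfolding has_real_derivative_iff_has_vector_derivative
      by (intro bounded_linear.has_vector_derivative[OF bounded_linear_inner_right]
          bounded_linear.has_vector_derivative[OF
            bounded_bilinear.bounded_linear_left[OF bounded_bilinear_matrix_vector_mult]]
          has_vector_derivative_cond_cov)
    have "psd (EE Th T s ** SX ** transpose (EE Th T s))"
      using psd_congruence[OF SX_psd, of "transpose (EE Th T s)"] by simp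
    then show "v \<bullet> (- (EE Th T s ** SX ** transpose (EE Th T s)) *v v) \<le> 0"
      by (simp add: psd_def matrix_vector_mult_neg_left)
  qed
  then show "0 \<le> v \<bullet> (cond_cov t *v v)"
    by (simp add: cond_cov_T)
qed

lemma view_cov_spd:
  assumes "t \<le> T"
  shows "sym_pos_def (view_cov t)"
proof -
  have "psd (P ** cond_cov t ** transpose P)"
    using psd_congruence[OF psd_cond_cov[OF assms], of "transpose P"] by simp
  moreover have "transpose (view_cov t) = view_cov t"
    using Om_spd by (simp add: view_cov_def matrix_simps transpose_cond_cov[OF assms] sym_pos_def_def)
  ultimately show ?thesis
    using Om_spd unfolding sym_pos_def_def psd_def view_cov_def
    by (simp add: matrix_vector_mult_add_rdistrib inner_add_right add_nonneg_pos)
qed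

lemma invertible_view_cov: "t \<le> T \<Longrightarrow> invertible (view_cov t)"
  by (rule sym_pos_def_invertible[OF view_cov_spd])

lemma transpose_view_precision:
  assumes "t \<le> T"
  shows "transpose (view_precision t) = view_precision t"
  using sym_pos_def_transpose_inv[OF view_cov_spd[OF assms]]
  by (simp add: view_precision_def matrix_transpose_mul matrix_mul_assoc)

lemma view_precision_T: "view_precision T = transpose P ** matrix_inv Om ** P"
  by (simp add: view_precision_def view_load_def view_cov_def cond_cov_T EE_T)

lemma view_gradient_T: "view_gradient mu y T = (transpose P ** matrix_inv Om) *v y"
  by (simp add: view_gradient_def view_load_def view_cov_def cond_cov_T EE_T matrix_vector_mul_assoc)

lemma has_vector_derivative_view_load:
  "(view_load has_vector_derivative view_load t ** Th) (at t within S)"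
  unfolding view_load_def[abs_def]
  using bounded_linear.has_vector_derivative[OF
      bounded_bilinear.bounded_linear_right[OF bounded_bilinear_matrix_mult] has_vector_derivative_EE]
  by (simp add: matrix_mul_assoc)

lemma has_vector_derivative_view_cov:
  "(view_cov has_vector_derivative - (view_load t ** SX ** transpose (view_load t))) (at t within S)"
proof -
  have "bounded_linear (\<lambda>X. P ** X ** transpose P)"
    by (intro bounded_linear_compose[OF bounded_bilinear.bounded_linear_left[OF bounded_bilinear_matrix_mult]
          bounded_bilinear.bounded_linear_right[OF bounded_bilinear_matrix_mult]])
  from bounded_linear.has_vector_derivative[OF this has_vector_derivative_cond_cov]
  have "(view_cov has_vector_derivative P ** - (EE Th T t ** SX ** transpose (EE Th T t)) ** transpose P + 0)
      (at t within S)"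
    unfolding view_cov_def[abs_def] by (intro has_vector_derivative_add has_vector_derivative_const)
  then show ?thesis
    by (simp add: view_load_def matrix_simps)
qed

lemma has_vector_derivative_inv_view_cov:
  assumes "t \<le> T"
  shows "((\<lambda>s. matrix_inv (view_cov s)) has_vector_derivative
      matrix_inv (view_cov t) ** (view_load t ** SX ** transpose (view_load t)) ** matrix_inv (view_cov t))
      (at t within {..T})"
  using has_vector_derivative_matrix_inv[OF has_vector_derivative_view_cov, of t "{..T}"]
    invertible_view_cov assms
  by (simp add: eventually_at_filter matrix_simps)

lemma has_vector_derivative_view_precision:
  assumes "t \<le> T"
  shows "(view_precision has_vector_derivative
      transpose Th ** view_precision t + view_precision t ** SX ** view_precision t + view_precision t ** Th)
      (at t within {..T})"
proof -
  note mult = bounded_bilinear.has_vector_derivative[OF bounded_bilinear_matrix_mult]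
  have "(view_precision has_vector_derivative
      transpose (view_load t ** Th) ** matrix_inv (view_cov t) ** view_load t
      + transpose (view_load t) ** (matrix_inv (view_cov t) ** (view_load t ** SX ** transpose (view_load t))
          ** matrix_inv (view_cov t)) ** view_load t
      + transpose (view_load t) ** matrix_inv (view_cov t) ** (view_load t ** Th)) (at t within {..T})"
    unfolding view_precision_def[abs_def]
    by (rule mult[OF mult[OF bounded_linear.has_vector_derivative[OF bounded_linear_transpose]]
          has_vector_derivative_view_load, THEN has_vector_derivative_eq_rhs])
       (auto intro: has_vector_derivative_view_load has_vector_derivative_inv_view_cov[OF assms]
          simp: matrix_add_rdistrib)
  then show ?thesis
    by (simp add: view_precision_def matrix_simps)
qed

lemma has_vector_derivative_view_gradient:
  assumes "t \<le> T"
  shows "(view_gradient mu y has_vector_derivative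
      transpose Th *v view_gradient mu y t + (view_precision t ** SX) *v view_gradient mu y t
      + (view_precision t ** Th) *v mu) (at t within {..T})"
proof -
  note mult = bounded_bilinear.has_vector_derivative[OF bounded_bilinear_matrix_vector_mult]
  define z where "z s = (y - P *v mu) + view_load s *v mu" for s
  have z_eq: "y - (P ** (mat 1 - EE Th T s)) *v mu = z s" for s
    by (simp add: z_def view_load_def matrix_diff_ldistrib matrix_vector_mult_diff_rdistrib)
  have "(z has_vector_derivative 0 + (view_load t ** Th) *v mu) (at t within {..T})"
    unfolding z_def[abs_def]
    by (intro has_vector_derivative_add has_vector_derivative_const
        mult[OF has_vector_derivative_view_load has_vector_derivative_const, THEN has_vector_derivative_eq_rhs])
       simp
  then have "(view_gradient mu y has_vector_derivative
      transpose (view_load t) *v (matrix_inv (view_cov t) *v ((view_load t ** Th) *v mu)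
        + (matrix_inv (view_cov t) ** (view_load t ** SX ** transpose (view_load t)) ** matrix_inv (view_cov t))
          *v z t)
      + transpose (view_load t ** Th) *v (matrix_inv (view_cov t) *v z t)) (at t within {..T})"
    unfolding view_gradient_def[abs_def] z_eq
    by (intro mult[OF bounded_linear.has_vector_derivative[OF bounded_linear_transpose
          has_vector_derivative_view_load]] mult[OF has_vector_derivative_inv_view_cov[OF assms]]) simp
  moreover have "transpose (view_load t) *v (matrix_inv (view_cov t) *v ((view_load t ** Th) *v mu)
        + (matrix_inv (view_cov t) ** (view_load t ** SX ** transpose (view_load t)) ** matrix_inv (view_cov t))
          *v z t)
      + transpose (view_load t ** Th) *v (matrix_inv (view_cov t) *v z t)
    = transpose Th *v view_gradient mu y t + (view_precision t ** SX) *v view_gradient mu y t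
      + (view_precision t ** Th) *v mu"
    unfolding view_gradient_def z_eq view_precision_def
    by (simp add: matrix_vector_simps matrix_transpose_mul matrix_mul_assoc algebra_simps
        del: transpose_matrix_vector)
  ultimately show ?thesis by simp
qed

lemma eta_eq: "eta Th LX P Om Sig T t = transpose LX ** transpose (view_load t) ** matrix_inv (view_cov t)"
  by (simp add: eta_def view_load_def view_cov_def cond_cov_def transpose_EE matrix_transpose_mul
      matrix_mul_assoc)

lemma beta_t_eq: "beta_t Th LX be LS P Om Sig T t = be - (LS ** transpose LX) ** view_precision t"
  by (simp add: beta_t_def eta_eq view_precision_def view_load_def matrix_mul_assoc)

lemma Theta_t_eq:
  assumes "SX = LX ** transpose LX"
  shows "Theta_t Th LX P Om Sig T t = Th + SX ** view_precision t"
  by (simp add: Theta_t_def eta_eq view_precision_def view_load_def matrix_mul_assoc assms)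

lemma alpha_t_eq: "alpha_t Th mu LX al LS P Om Sig T y t = al + (LS ** transpose LX) *v view_gradient mu y t"
  by (simp add: alpha_t_def eta_eq view_gradient_def matrix_vector_mul_assoc matrix_mul_assoc)

lemma Theta_t_mu_t_eq:
  assumes "SX = LX ** transpose LX" and "invertible (Theta_t Th LX P Om Sig T t)"
  shows "Theta_t Th LX P Om Sig T t *v mu_t Th mu LX P Om Sig T y t = Th *v mu + SX *v view_gradient mu y t"
proof -
  have "Theta_t Th LX P Om Sig T t *v mu_t Th mu LX P Om Sig T y t
      = Theta_t Th LX P Om Sig T t *v mu + (LX ** eta Th LX P Om Sig T t) *v (y - P *v mu)"
    by (simp add: mu_t_def matrix_vector_right_distrib matrix_vector_mul_assoc matrix_mul_assoc
        matrix_inv_right[OF assms(2)])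
  also have "\<dots> = Th *v mu + SX *v view_gradient mu y t"
    by (simp add: Theta_t_eq[OF assms(1)] eta_eq view_gradient_def view_precision_def assms(1)
        view_load_def matrix_vector_simps matrix_simps algebra_simps)
  finally show ?thesis .
qed

lemma riccati_view_shift:
  assumes "SX = LX ** transpose LX" and "SSX = LS ** transpose LX"
    and "transpose (matrix_inv SS) = matrix_inv SS" and "t \<le> T" and "S \<subseteq> {..T}"
    and "(A has_vector_derivative - ric_expr g SS SX SSX (beta_t Th LX be LS P Om Sig T t)
           (Theta_t Th LX P Om Sig T t) (A t)) (at t within S)"
  shows "((\<lambda>s. A s - view_precision s) has_vector_derivative
           - ric_expr g SS SX SSX be Th (A t - view_precision t)) (at t within S)"
proof -
  have "- ric_expr g SS SX SSX (beta_t Th LX be LS P Om Sig T t) (Theta_t Th LX P Om Sig T t) (A t)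
      - (transpose Th ** view_precision t + view_precision t ** SX ** view_precision t + view_precision t ** Th)
      = - ric_expr g SS SX SSX be Th (A t - view_precision t)"
    unfolding beta_t_eq Theta_t_eq[OF assms(1)] assms(2)[symmetric]
      ric_expr_shift[OF transpose_view_precision[OF assms(4)] assms(3) SX_sym, symmetric]
    by simp
  with has_vector_derivative_diff[OF assms(6)
      has_vector_derivative_within_subset[OF has_vector_derivative_view_precision[OF assms(4)] assms(5)]]
  show ?thesis by simp
qed

lemma linear_view_shift:
  assumes "SX = LX ** transpose LX" and "SSX = LS ** transpose LX"
    and "invertible (Theta_t Th LX P Om Sig T t)" and "t \<le> T" and "S \<subseteq> {..T}"
    and "(b has_vector_derivative - lin_expr g rf SS SX SSX (beta_t Th LX be LS P Om Sig T t)
           (alpha_t Th mu LX al LS P Om Sig T y t) (Theta_t Th LX P Om Sig T t)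
           (mu_t Th mu LX P Om Sig T y t) (A t) (b t)) (at t within S)"
  shows "((\<lambda>s. b s + view_gradient mu y s) has_vector_derivative
           - lin_expr g rf SS SX SSX be al Th mu (A t - view_precision t) (b t + view_gradient mu y t))
           (at t within S)"
  using has_vector_derivative_add[OF assms(6)
      has_vector_derivative_within_subset[OF has_vector_derivative_view_gradient[OF assms(4)] assms(5)]]
  by (simp add: beta_t_eq alpha_t_eq assms(2) flip: Theta_t_eq[OF assms(1)]
      lin_expr_shift[OF transpose_view_precision[OF assms(4)] SX_sym
        Theta_t_mu_t_eq[OF assms(1,3), unfolded Theta_t_eq[OF assms(1)]]])

lemma policy_view_shift:
  assumes "SSX = LS ** transpose LX"
  shows "(1 / g) *\<^sub>R (Si *v (alpha_t Th mu LX al LS P Om Sig T y t + beta_t Th LX be LS P Om Sig T t *v x - c))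
      + (1 / g) *\<^sub>R ((Si ** SSX) *v (A *v x + b))
    = (1 / g) *\<^sub>R (Si *v (al + be *v x - c))
      + (1 / g) *\<^sub>R ((Si ** SSX) *v ((A - view_precision t) *v x + (b + view_gradient mu y t)))"
  by (simp add: alpha_t_eq beta_t_eq assms matrix_vector_simps algebra_simps)

end

theorem theorem5p2:
  fixes gam rf T :: real
    and Th :: "real^'d^'d" and mu :: "real^'d" and LX :: "real^'w^'d"
    and al :: "real^'n" and be :: "real^'d^'n" and LS :: "real^'w^'n"
    and P :: "real^'d^'k" and Om :: "real^'k^'k" and Sig :: "real^'d^'d"
    and y :: "real^'k"
    and A :: "real \<Rightarrow> real^'d^'d" and b :: "real \<Rightarrow> real^'d"
  defines "SX \<equiv> LX ** transpose LX"
    and "SS \<equiv> LS ** transpose LS"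
    and "SSX \<equiv> LS ** transpose LX"
  assumes gam: "gam > 1"
    and T: "T > 0"
    and Th_eig: "eigs_pos_real_part Th"
    and LX_rank: "rank LX = CARD('d)"
    and LS_rank: "rank LS = CARD('n)"
    and Om_pd: "sym_pos_def Om"
    and Sig_lyap: "Th ** Sig + Sig ** transpose Th = SX"
    and Theta_t_inv: "\<forall>t\<in>{0..T}. invertible (Theta_t Th LX P Om Sig T t)"
    and A_ode: "\<forall>t\<in>{0..T}. (A has_vector_derivative
               - ric_expr gam SS SX SSX (beta_t Th LX be LS P Om Sig T t)
                   (Theta_t Th LX P Om Sig T t) (A t)) (at t within {0..T})"
    and A_T: "A T = 0"
    and b_ode: "\<forall>t\<in>{0..T}. (b has_vector_derivative
               - lin_expr gam rf SS SX SSX (beta_t Th LX be LS P Om Sig T t)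
                   (alpha_t Th mu LX al LS P Om Sig T y t) (Theta_t Th LX P Om Sig T t)
                   (mu_t Th mu LX P Om Sig T y t) (A t) (b t)) (at t within {0..T})"
    and b_T: "b T = 0"
  shows
   "(\<exists>A1 :: real \<Rightarrow> real^'d^'d. \<exists>b1 :: real \<Rightarrow> real^'d.
       (\<forall>t\<in>{0..T}. (A1 has_vector_derivative - ric_expr gam SS SX SSX be Th (A1 t))
                     (at t within {0..T}))
     \<and> A1 T = - (transpose P ** matrix_inv Om ** P)
     \<and> (\<forall>t\<in>{0..T}. (b1 has_vector_derivative
                     - lin_expr gam rf SS SX SSX be al Th mu (A1 t) (b1 t)) (at t within {0..T}))
     \<and> b1 T = (transpose P ** matrix_inv Om) *v y
     \<and> (\<forall>t\<in>{0..T}. \<forall>x :: real^'d.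
          (1 / gam) *\<^sub>R (matrix_inv SS *v
              (alpha_t Th mu LX al LS P Om Sig T y t + beta_t Th LX be LS P Om Sig T t *v x - rf *\<^sub>R vec 1))
          + (1 / gam) *\<^sub>R ((matrix_inv SS ** SSX) *v (A t *v x + b t))
        = (1 / gam) *\<^sub>R (matrix_inv SS *v (al + be *v x - rf *\<^sub>R vec 1))
          + (1 / gam) *\<^sub>R ((matrix_inv SS ** SSX) *v (A1 t *v x + b1 t)))
     \<and> (\<forall>t\<in>{0..T}. nsd (A1 t)))
    \<and> (\<forall>(Om1 :: real^'k^'k) (Om2 :: real^'k^'k) (A11 :: real \<Rightarrow> real^'d^'d) (A12 :: real \<Rightarrow> real^'d^'d).
         sym_pos_def Om1 \<longrightarrow> sym_pos_def Om2 \<longrightarrow>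
         loewner_le (matrix_inv Om2) (matrix_inv Om1) \<longrightarrow>
         (\<forall>t\<in>{0..T}. (A11 has_vector_derivative - ric_expr gam SS SX SSX be Th (A11 t))
                        (at t within {0..T})) \<longrightarrow>
         A11 T = - (transpose P ** matrix_inv Om1 ** P) \<longrightarrow>
         (\<forall>t\<in>{0..T}. (A12 has_vector_derivative - ric_expr gam SS SX SSX be Th (A12 t))
                        (at t within {0..T})) \<longrightarrow>
         A12 T = - (transpose P ** matrix_inv Om2 ** P) \<longrightarrow>
         (\<forall>t\<in>{0..T}. loewner_le (A11 t) (A12 t)))"
proof -
  have SX_eq: "SX = LX ** transpose LX" and SSX_eq: "SSX = LS ** transpose LX"
    by (simp_all add: SX_def SSX_def)
  have SX_sym: "transpose SX = SX" by (simp add: SX_eq matrix_transpose_mul)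
  have SS: "sym_pos_def SS" unfolding SS_def by (rule sym_pos_def_gram[OF LS_rank])
  interpret view_model Th Sig SX P Om T
    by unfold_locales (use Sig_lyap SX_sym Om_pd psd_gram[of LX] in \<open>simp_all add: SX_eq\<close>)
  let ?A1 = "\<lambda>t. A t - view_precision t" and ?b1 = "\<lambda>t. b t + view_gradient mu y t"
  have A1_ode: "\<forall>t\<in>{0..T}. (?A1 has_vector_derivative - ric_expr gam SS SX SSX be Th (?A1 t))
      (at t within {0..T})"
    using A_ode by (auto intro!: riccati_view_shift[OF SX_eq SSX_eq sym_pos_def_transpose_inv[OF SS]])
  have b1_ode: "\<forall>t\<in>{0..T}. (?b1 has_vector_derivative - lin_expr gam rf SS SX SSX be al Th mu (?A1 t) (?b1 t))
      (at t within {0..T})"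
    using b_ode Theta_t_inv by (auto intro!: linear_view_shift[OF SX_eq SSX_eq])
  have A1_T: "?A1 T = - (transpose P ** matrix_inv Om ** P)"
    by (simp add: A_T view_precision_T)
  have "\<forall>t\<in>{0..T}. nsd (?A1 t)"
    using ric_expr_solution_nsd[OF less_imp_le[OF gam] SS SX_sym A1_ode Om_pd A1_T] by blast
  then show ?thesis
    using A1_ode b1_ode A1_T
    by (intro conjI exI[of _ ?A1] exI[of _ ?b1])
       (auto simp: b_T view_gradient_T policy_view_shift[OF SSX_eq] intro: ric_expr_solution_mono[OF SS SX_sym])
qed

end
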